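(* Let $M$ be a monoid and let $X$ be a finite $M$-partial order. Then (i) $\mathrm{Fr}(X)$, with the action $ax=\{ai : i\in x\}$ for $a\in M$, $x\in \mathrm{Fr}(X)$, is a strong $M$-partial order; and (ii) the function $\pi\colon \mathrm{Fr}(X)\to X$ given by $\pi(x)=\max x$ is an epimorphism of $M$-partial orders.
   Context: A monoid acting on a set acts with the identity acting as the identity map. An $M$-partial order is a set $X$ with an action of $M$ and a partial order $\leq_X$ such that $x\leq_X y$ implies $ax\leq_X ay$. It is strong if for all $y\in X$, $a\in M$: $\{ax : x\leq_X y\}=\{x\in X : x\leq_X ay\}$. For $M$-partial orders $X,Y$, a map $f\colon X\to Y$ is an epimorphism if it is onto, $M$-equivariant, and $\leq_Y$ is the image of $\leq_X$ under $f\times f$ (i.e. $y\leq_Y y'$ iff there are $x\leq_X x'$ with $f(x)=y$, $f(x')=y'$). For a finite partial order $X$, $\mathrm{Fr}(X)$ is the set of non-empty subsets of $X$ linearly ordered by $\leq_X$, ordered by: $x\leq_{\mathrm{Fr}(X)} y$ iff $x\subseteq y$ and $i<_X j$ for all $i\in x$ and $j\in y\setminus x$. *)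

theory Defs
  imports Main
begin

definition monoid_action :: "'x set \<Rightarrow> ('m::monoid_mult \<Rightarrow> 'x \<Rightarrow> 'x) \<Rightarrow> bool" where
  "monoid_action X act \<longleftrightarrow>
     (\<forall>a. \<forall>x\<in>X. act a x \<in> X) \<and>
     (\<forall>x\<in>X. act 1 x = x) \<and>
     (\<forall>a b. \<forall>x\<in>X. act (a * b) x = act a (act b x))"

definition partial_order_rel :: "'x set \<Rightarrow> 'x rel \<Rightarrow> bool" where
  "partial_order_rel X r \<longleftrightarrow>
     r \<subseteq> X \<times> X \<and>
     (\<forall>x\<in>X. (x, x) \<in> r) \<and>
     (\<forall>x y. (x, y) \<in> r \<and> (y, x) \<in> r \<longrightarrow> x = y) \<and>
     (\<forall>x y z. (x, y) \<in> r \<and> (y, z) \<in> r \<longrightarrow> (x, z) \<in> r)"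

definition M_partial_order :: "'x set \<Rightarrow> 'x rel \<Rightarrow> ('m::monoid_mult \<Rightarrow> 'x \<Rightarrow> 'x) \<Rightarrow> bool" where
  "M_partial_order X r act \<longleftrightarrow>
     monoid_action X act \<and> partial_order_rel X r \<and>
     (\<forall>a x y. (x, y) \<in> r \<longrightarrow> (act a x, act a y) \<in> r)"

definition strong_M_partial_order :: "'x set \<Rightarrow> 'x rel \<Rightarrow> ('m::monoid_mult \<Rightarrow> 'x \<Rightarrow> 'x) \<Rightarrow> bool" where
  "strong_M_partial_order X r act \<longleftrightarrow>
     M_partial_order X r act \<and>
     (\<forall>y\<in>X. \<forall>a. {act a x | x. (x, y) \<in> r} = {x \<in> X. (x, act a y) \<in> r})"

definition M_epimorphism ::
  "'x set \<Rightarrow> 'x rel \<Rightarrow> ('m::monoid_mult \<Rightarrow> 'x \<Rightarrow> 'x) \<Rightarrow>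
   'y set \<Rightarrow> 'y rel \<Rightarrow> ('m \<Rightarrow> 'y \<Rightarrow> 'y) \<Rightarrow> ('x \<Rightarrow> 'y) \<Rightarrow> bool" where
  "M_epimorphism X rX actX Y rY actY f \<longleftrightarrow>
     M_partial_order X rX actX \<and> M_partial_order Y rY actY \<and>
     f ` X = Y \<and>
     (\<forall>a. \<forall>x\<in>X. f (actX a x) = actY a (f x)) \<and>
     rY = (\<lambda>(x, x'). (f x, f x')) ` rX"

definition Fr :: "'x set \<Rightarrow> 'x rel \<Rightarrow> 'x set set" where
  "Fr X r = {x. x \<subseteq> X \<and> x \<noteq> {} \<and> (\<forall>i\<in>x. \<forall>j\<in>x. (i, j) \<in> r \<or> (j, i) \<in> r)}"

definition Fr_rel :: "'x set \<Rightarrow> 'x rel \<Rightarrow> 'x set rel" where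
  "Fr_rel X r = {(x, y). x \<in> Fr X r \<and> y \<in> Fr X r \<and> x \<subseteq> y \<and>
                  (\<forall>i\<in>x. \<forall>j\<in>y - x. (i, j) \<in> r \<and> i \<noteq> j)}"

definition Fr_act :: "('m \<Rightarrow> 'x \<Rightarrow> 'x) \<Rightarrow> 'm \<Rightarrow> 'x set \<Rightarrow> 'x set" where
  "Fr_act act a x = act a ` x"

definition Fr_max :: "'x rel \<Rightarrow> 'x set \<Rightarrow> 'x" where
  "Fr_max r x = (THE m. m \<in> x \<and> (\<forall>i\<in>x. (i, m) \<in> r))"

end

theory Submission
  imports Defs
begin

text \<open>The action on Fr(X) is the pointwise image, which preserves chains and, by monotonicity,
  the relation "x is an initial segment of y". Strongness amounts to lifting an initial segment
  z of a y back along a: the preimage x = {i \<in> y. a i \<in> z} is an initial segment of y, since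
  for i \<in> x and j \<in> y - x the chain y forces i \<le> j or j \<le> i, and j \<le> i would give
  a j \<le> a i, contradicting a i < a j. For finite X every chain has a
  maximum; taking maxima commutes with the action by monotonicity, is onto via singletons, and
  every i \<le> j is the image of the pair of chains {i} \<le> {i, j}.\<close>

lemma partial_order_relD:
  assumes "partial_order_rel X r"
  shows "r \<subseteq> X \<times> X"
    and "x \<in> X \<Longrightarrow> (x, x) \<in> r"
    and "(x, y) \<in> r \<Longrightarrow> (y, x) \<in> r \<Longrightarrow> x = y"
    and "(x, y) \<in> r \<Longrightarrow> (y, z) \<in> r \<Longrightarrow> (x, z) \<in> r"
  using assms unfolding partial_order_rel_def by blast+

lemma M_partial_orderD:
  assumes "M_partial_order X r act"
  shows "monoid_action X act" and "partial_order_rel X r"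
    and "(x, y) \<in> r \<Longrightarrow> (act a x, act a y) \<in> r"
  using assms unfolding M_partial_order_def by blast+

lemma finite_chain_has_greatest:
  assumes "partial_order_rel X r" and "finite C" and "C \<noteq> {}"
    and "\<forall>i\<in>C. \<forall>j\<in>C. (i, j) \<in> r \<or> (j, i) \<in> r"
  shows "\<exists>m\<in>C. \<forall>i\<in>C. (i, m) \<in> r"
  using assms(2-4)
proof (induction C rule: finite_ne_induct)
  case (singleton a)
  then show ?case by auto
next
  case (insert a F)
  then obtain m where m: "m \<in> F" "\<forall>i\<in>F. (i, m) \<in> r" by auto
  have "(m, a) \<in> r \<or> (a, m) \<in> r" using insert.prems m by auto
  then show ?case
  proof
    assume "(m, a) \<in> r"
    moreover have "(a, a) \<in> r" using insert.prems by auto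
    ultimately have "\<forall>i\<in>insert a F. (i, a) \<in> r"
      using m partial_order_relD(4)[OF assms(1)] by blast
    then show ?thesis by blast
  qed (use m in auto)
qed

lemma Fr_max_eqI:
  assumes "partial_order_rel X r" and "m \<in> C" and "\<forall>i\<in>C. (i, m) \<in> r"
  shows "Fr_max r C = m"
  unfolding Fr_max_def
  using assms partial_order_relD(3)[OF assms(1)] by (intro the_equality) blast+

lemma Fr_max_greatest:
  assumes "partial_order_rel X r" and "finite X" and "C \<in> Fr X r"
  shows "Fr_max r C \<in> C" and "\<forall>i\<in>C. (i, Fr_max r C) \<in> r"
proof -
  have C: "C \<subseteq> X" "C \<noteq> {}" "\<forall>i\<in>C. \<forall>j\<in>C. (i, j) \<in> r \<or> (j, i) \<in> r"
    using assms(3) unfolding Fr_def by auto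
  have "finite C" using C(1) assms(2) by (rule finite_subset)
  then obtain m where m: "m \<in> C" "\<forall>i\<in>C. (i, m) \<in> r"
    using finite_chain_has_greatest[OF assms(1) _ C(2,3)] by blast
  moreover have "Fr_max r C = m" using Fr_max_eqI[OF assms(1) m] .
  ultimately show "Fr_max r C \<in> C" and "\<forall>i\<in>C. (i, Fr_max r C) \<in> r"
    by simp_all
qed

lemma Fr_act_in_Fr:
  assumes "M_partial_order X r act" and "C \<in> Fr X r"
  shows "Fr_act act a C \<in> Fr X r"
proof -
  have "act a x \<in> X" if "x \<in> X" for x
    using that M_partial_orderD(1)[OF assms(1)] unfolding monoid_action_def by blast
  then show ?thesis
    using assms(2) M_partial_orderD(3)[OF assms(1)] unfolding Fr_def Fr_act_def by blast
qed

lemma monoid_action_Fr_act: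
  assumes "M_partial_order X r act"
  shows "monoid_action (Fr X r) (Fr_act act)"
  unfolding monoid_action_def
proof (intro conjI allI ballI)
  fix a b C assume "C \<in> Fr X r"
  then have C: "C \<subseteq> X" unfolding Fr_def by blast
  have "act 1 x = x" "act (a * b) x = act a (act b x)" if "x \<in> X" for x
    using that M_partial_orderD(1)[OF assms] unfolding monoid_action_def by auto
  with C show "Fr_act act 1 C = C" "Fr_act act (a * b) C = Fr_act act a (Fr_act act b C)"
    unfolding Fr_act_def image_image by (force intro: image_cong)+
qed (use Fr_act_in_Fr[OF assms] in blast)

lemma Fr_rel_trans:
  assumes "(x, y) \<in> Fr_rel X r" and "(y, z) \<in> Fr_rel X r"
  shows "(x, z) \<in> Fr_rel X r"
proof -
  have "(i, j) \<in> r \<and> i \<noteq> j" if "i \<in> x" "j \<in> z - x" for i j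
    using assms that unfolding Fr_rel_def by (cases "j \<in> y") auto
  then show ?thesis using assms unfolding Fr_rel_def by auto
qed

lemma partial_order_rel_Fr_rel: "partial_order_rel (Fr X r) (Fr_rel X r)"
  unfolding partial_order_rel_def
proof (intro conjI allI impI)
  show "\<And>x y z. (x, y) \<in> Fr_rel X r \<and> (y, z) \<in> Fr_rel X r \<Longrightarrow> (x, z) \<in> Fr_rel X r"
    using Fr_rel_trans by blast
qed (auto simp: Fr_rel_def)

lemma Fr_rel_act_mono:
  assumes "M_partial_order X r act" and "(x, y) \<in> Fr_rel X r"
  shows "(Fr_act act a x, Fr_act act a y) \<in> Fr_rel X r"
proof -
  have x: "x \<in> Fr X r" and y: "y \<in> Fr X r" and "x \<subseteq> y"
    and below: "\<forall>i\<in>x. \<forall>j\<in>y - x. (i, j) \<in> r \<and> i \<noteq> j"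
    using assms(2) unfolding Fr_rel_def by auto
  have "(act a i, act a j) \<in> r" if "i \<in> x" "j \<in> y - x" for i j
    using that below M_partial_orderD(3)[OF assms(1)] by blast
  then have "\<forall>i'\<in>act a ` x. \<forall>j'\<in>act a ` y - act a ` x. (i', j') \<in> r \<and> i' \<noteq> j'"
    by blast
  with \<open>x \<subseteq> y\<close> Fr_act_in_Fr[OF assms(1) x] Fr_act_in_Fr[OF assms(1) y] show ?thesis
    unfolding Fr_rel_def Fr_act_def by auto
qed

lemma M_partial_order_Fr:
  assumes "M_partial_order X r act"
  shows "M_partial_order (Fr X r) (Fr_rel X r) (Fr_act act)"
  unfolding M_partial_order_def
  using monoid_action_Fr_act[OF assms] partial_order_rel_Fr_rel Fr_rel_act_mono[OF assms]
  by (intro conjI allI impI)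

lemma Fr_rel_below_act_lift:
  assumes "M_partial_order X r act" and y: "y \<in> Fr X r"
    and z: "(z, Fr_act act a y) \<in> Fr_rel X r"
  defines "x \<equiv> {i \<in> y. act a i \<in> z}"
  shows "(x, y) \<in> Fr_rel X r" and "Fr_act act a x = z"
proof -
  have "z \<in> Fr X r" and "z \<subseteq> act a ` y"
    and below: "\<forall>i\<in>z. \<forall>j\<in>act a ` y - z. (i, j) \<in> r \<and> i \<noteq> j"
    using z unfolding Fr_rel_def Fr_act_def by simp_all
  from \<open>z \<subseteq> act a ` y\<close> show image: "Fr_act act a x = z"
    unfolding x_def Fr_act_def by auto
  have chain: "\<forall>i\<in>y. \<forall>j\<in>y. (i, j) \<in> r \<or> (j, i) \<in> r"
    using y unfolding Fr_def by auto
  have "(i, j) \<in> r \<and> i \<noteq> j" if i: "i \<in> x" and j: "j \<in> y - x" for i j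
  proof -
    have "(act a i, act a j) \<in> r" "act a i \<noteq> act a j"
      using i j below unfolding x_def by auto
    then have "(j, i) \<notin> r"
      using M_partial_orderD(3)[OF assms(1)]
        partial_order_relD(3)[OF M_partial_orderD(2)[OF assms(1)]] by blast
    then show ?thesis using chain i j unfolding x_def by auto
  qed
  moreover have "x \<in> Fr X r"
    using y image \<open>z \<in> Fr X r\<close> unfolding x_def Fr_def Fr_act_def by auto
  ultimately show "(x, y) \<in> Fr_rel X r"
    using y unfolding Fr_rel_def x_def by auto
qed

lemma strong_M_partial_order_Fr:
  assumes "M_partial_order X r act"
  shows "strong_M_partial_order (Fr X r) (Fr_rel X r) (Fr_act act)"
  unfolding strong_M_partial_order_def
proof (intro conjI ballI allI)
  fix y a assume y: "y \<in> Fr X r"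
  show "{Fr_act act a x | x. (x, y) \<in> Fr_rel X r} = {z \<in> Fr X r. (z, Fr_act act a y) \<in> Fr_rel X r}"
  proof (intro equalityI subsetI)
    fix w assume "w \<in> {Fr_act act a x | x. (x, y) \<in> Fr_rel X r}"
    then obtain x where w: "w = Fr_act act a x" and xy: "(x, y) \<in> Fr_rel X r" by blast
    have "(w, Fr_act act a y) \<in> Fr_rel X r" using Fr_rel_act_mono[OF assms xy] w by simp
    moreover from this have "w \<in> Fr X r" unfolding Fr_rel_def by blast
    ultimately show "w \<in> {z \<in> Fr X r. (z, Fr_act act a y) \<in> Fr_rel X r}" by blast
  next
    fix z assume "z \<in> {z \<in> Fr X r. (z, Fr_act act a y) \<in> Fr_rel X r}"
    then have "(z, Fr_act act a y) \<in> Fr_rel X r" by simp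
    from Fr_rel_below_act_lift[OF assms y this]
    show "z \<in> {Fr_act act a x | x. (x, y) \<in> Fr_rel X r}" by blast
  qed
qed (rule M_partial_order_Fr[OF assms])

lemma Fr_max_singleton:
  assumes "partial_order_rel X r" and "i \<in> X"
  shows "{i} \<in> Fr X r" and "Fr_max r {i} = i"
proof -
  have "(i, i) \<in> r" using partial_order_relD(2)[OF assms] .
  then show "{i} \<in> Fr X r" "Fr_max r {i} = i"
    using assms(2) Fr_max_eqI[OF assms(1), of i "{i}"] unfolding Fr_def by auto
qed

lemma Fr_max_act:
  assumes "M_partial_order X r act" and "finite X" and "C \<in> Fr X r"
  shows "Fr_max r (Fr_act act a C) = act a (Fr_max r C)"
proof -
  note po = M_partial_orderD(2)[OF assms(1)]
  have "act a (Fr_max r C) \<in> act a ` C" "\<forall>i\<in>act a ` C. (i, act a (Fr_max r C)) \<in> r"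
    using Fr_max_greatest[OF po assms(2,3)] M_partial_orderD(3)[OF assms(1)] by blast+
  then show ?thesis unfolding Fr_act_def by (rule Fr_max_eqI[OF po])
qed

lemma image_Fr_max:
  assumes "partial_order_rel X r" and "finite X"
  shows "Fr_max r ` Fr X r = X"
proof
  show "Fr_max r ` Fr X r \<subseteq> X"
    using Fr_max_greatest(1)[OF assms] unfolding Fr_def by blast
  show "X \<subseteq> Fr_max r ` Fr X r"
    using Fr_max_singleton[OF assms(1)] by (metis image_eqI subsetI)
qed

lemma image_Fr_rel_Fr_max:
  assumes "partial_order_rel X r" and "finite X"
  shows "(\<lambda>(x, x'). (Fr_max r x, Fr_max r x')) ` Fr_rel X r = r"
proof (intro equalityI subsetI)
  fix p assume "p \<in> (\<lambda>(x, x'). (Fr_max r x, Fr_max r x')) ` Fr_rel X r"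
  then obtain x y where p: "p = (Fr_max r x, Fr_max r y)" and xy: "(x, y) \<in> Fr_rel X r"
    by auto
  from xy have "x \<in> Fr X r" "y \<in> Fr X r" "x \<subseteq> y" unfolding Fr_rel_def by auto
  with p show "p \<in> r" using Fr_max_greatest[OF assms] by blast
next
  fix p assume "p \<in> r"
  then obtain i j where p: "p = (i, j)" and ij: "(i, j) \<in> r" by (cases p) auto
  then have X: "i \<in> X" "j \<in> X" using partial_order_relD(1)[OF assms(1)] by auto
  have refl: "(i, i) \<in> r" "(j, j) \<in> r" using X partial_order_relD(2)[OF assms(1)] by auto
  have "{i, j} \<in> Fr X r" using X ij refl unfolding Fr_def by auto
  then have "({i}, {i, j}) \<in> Fr_rel X r"
    using Fr_max_singleton(1)[OF assms(1) X(1)] ij unfolding Fr_rel_def by auto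
  moreover have "Fr_max r {i, j} = j" using Fr_max_eqI[OF assms(1), of j "{i, j}"] ij refl by simp
  moreover have "Fr_max r {i} = i" using Fr_max_singleton(2)[OF assms(1) X(1)] .
  ultimately show "p \<in> (\<lambda>(x, x'). (Fr_max r x, Fr_max r x')) ` Fr_rel X r"
    unfolding p by (force intro: image_eqI[where x = "({i}, {i, j})"])
qed

lemma M_epimorphism_Fr_max:
  assumes "M_partial_order X r act" and "finite X"
  shows "M_epimorphism (Fr X r) (Fr_rel X r) (Fr_act act) X r act (Fr_max r)"
proof -
  note po = M_partial_orderD(2)[OF assms(1)]
  show ?thesis
    unfolding M_epimorphism_def
    using M_partial_order_Fr[OF assms(1)] assms(1) Fr_max_act[OF assms]
      image_Fr_max[OF po assms(2)] image_Fr_rel_Fr_max[OF po assms(2)]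
    by (intro conjI ballI allI) simp_all
qed

theorem lemma2p2:
  fixes X :: "'x set" and r :: "'x rel" and act :: "'m::monoid_mult \<Rightarrow> 'x \<Rightarrow> 'x"
  assumes "finite X"
    and "M_partial_order X r act"
  shows "strong_M_partial_order (Fr X r) (Fr_rel X r) (Fr_act act)
       \<and> M_epimorphism (Fr X r) (Fr_rel X r) (Fr_act act) X r act (Fr_max r)"
  using strong_M_partial_order_Fr[OF assms(2)] M_epimorphism_Fr_max[OF assms(2,1)] by blast

end
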